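(* Let $N\in\mathbb{N}$ and $y\in\Gamma_N$. Then the group $G=\langle R,s\rangle\subset GL_3(\mathbb{R})$ stabilises $X_{N,y}(\mathbb{Z})$: for every $P\in X_{N,y}(\mathbb{Z})$, the orbit $\{g(P)\mid g\in G\}$ is contained in $X_{N,y}(\mathbb{Z})$.
   Context: $R=\frac12\begin{pmatrix}1&0&-3\\0&2&0\\1&0&1\end{pmatrix}$ and $s$ is the reflection $s(a,b,c)=(a,b,-c)$. $X_{N,y}(\mathbb{Z})=\{(a,y,b)\mid a,b\in\mathbb{Z},\ a^2+2y^2+3b^2=48N+30\}$. $I_N$ is the set of odd integers $y$ with $|y|<\sqrt{15+24N}$. For $y\in I_N$, write $y^2=3p$ or $y^2=3p+1$ with $p\in\mathbb{Z}$, set $M_y=16N+10-2p$, $\mathcal{I}_{N,y}=\{m\in\mathbb{Z}\mid|m|\le\lfloor\sqrt{48N+30-2y^2}\rfloor\}$, $\Omega_{N,y}(0)=\{m\in\mathcal{I}_{N,y}\mid m^2\equiv0\ (3),\ M_y-m^2/3\text{ is a perfect square}\}$, $\Omega_{N,y}(1)=\{m\in\mathcal{I}_{N,y}\mid m^2\equiv1\ (3),\ M_y-(m^2+2)/3\text{ is a perfect square}\}$, and $\Gamma_N=\{y\in I_N\mid\Omega_{N,y}(0)\ne\emptyset\text{ or }\Omega_{N,y}(1)\ne\emptyset\}$. *)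

theory Defs
  imports "HOL-Analysis.Analysis"
begin

definition Rmat :: "real^3^3" where
  "Rmat = vector [vector [1/2, 0, -3/2], vector [0, 1, 0], vector [1/2, 0, 1/2]]"

definition smat :: "real^3^3" where
  "smat = vector [vector [1, 0, 0], vector [0, 1, 0], vector [0, 0, -1]]"

inductive_set genGroup :: "(real^3^3) set" where
  gen_one: "mat 1 \<in> genGroup"
| gen_R: "Rmat \<in> genGroup"
| gen_s: "smat \<in> genGroup"
| gen_mult: "g \<in> genGroup \<Longrightarrow> h \<in> genGroup \<Longrightarrow> g ** h \<in> genGroup"
| gen_inv: "g \<in> genGroup \<Longrightarrow> matrix_inv g \<in> genGroup"

definition XNy :: "nat \<Rightarrow> int \<Rightarrow> (real^3) set" where
  "XNy N y = {v. \<exists>a b :: int. v = vector [real_of_int a, real_of_int y, real_of_int b]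
                 \<and> a^2 + 2*y^2 + 3*b^2 = 48 * int N + 30}"

definition I_N :: "nat \<Rightarrow> int set" where
  "I_N N = {y. odd y \<and> real_of_int \<bar>y\<bar> < sqrt (15 + 24 * real N)}"

definition is_square :: "int \<Rightarrow> bool" where
  "is_square x \<longleftrightarrow> (\<exists>k::int. x = k^2)"

text \<open>p with y^2 = 3p or y^2 = 3p+1 (y^2 mod 3 is 0 or 1, so p = y^2 div 3).\<close>
definition p_of :: "int \<Rightarrow> int" where
  "p_of y = y^2 div 3"

definition M_y :: "nat \<Rightarrow> int \<Rightarrow> int" where
  "M_y N y = 16 * int N + 10 - 2 * p_of y"

definition I_Ny :: "nat \<Rightarrow> int \<Rightarrow> int set" where
  "I_Ny N y = {m. real_of_int \<bar>m\<bar> \<le> of_int \<lfloor>sqrt (real_of_int (48 * int N + 30 - 2 * y^2))\<rfloor>}"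

definition Omega0 :: "nat \<Rightarrow> int \<Rightarrow> int set" where
  "Omega0 N y = {m \<in> I_Ny N y. m^2 mod 3 = 0 \<and> is_square (M_y N y - m^2 div 3)}"

definition Omega1 :: "nat \<Rightarrow> int \<Rightarrow> int set" where
  "Omega1 N y = {m \<in> I_Ny N y. m^2 mod 3 = 1 \<and> is_square (M_y N y - (m^2 + 2) div 3)}"

definition Gamma_N :: "nat \<Rightarrow> int set" where
  "Gamma_N N = {y \<in> I_N N. Omega0 N y \<noteq> {} \<or> Omega1 N y \<noteq> {}}"

end

theory Submission
  imports Defs
begin

text \<open>Both generators fix the middle coordinate and preserve the form \<open>a\<^sup>2 + 3b\<^sup>2\<close>
(R acts as a rotation of order 6 for it). R sends \<open>(a, b)\<close> to \<open>((a - 3b)/2, (a + b)/2)\<close>, which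
is integral on \<open>X\<^sub>N\<^sub>,\<^sub>y(\<int>)\<close> because \<open>a\<^sup>2 + 3b\<^sup>2 = 48N + 30 - 2y\<^sup>2\<close> is even and hence so is
\<open>a + b\<close>. Thus R and s map \<open>X\<^sub>N\<^sub>,\<^sub>y(\<int>)\<close> into itself, and since \<open>R\<^sup>-\<^sup>1 = sRs\<close> and \<open>s\<^sup>-\<^sup>1 = s\<close>,
both lie in the stabiliser of \<open>X\<^sub>N\<^sub>,\<^sub>y(\<int>)\<close>, a group, which therefore contains all of G.\<close>

lemma matrix_inv_inverse:
  fixes A :: "'a::semiring_1^'n^'m"
  assumes "invertible A"
  shows "A ** matrix_inv A = mat 1" and "matrix_inv A ** A = mat 1"
  using someI_ex[OF assms[unfolded invertible_def]] unfolding matrix_inv_def by auto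

lemma invertible_matrix_inv:
  fixes A :: "'a::semiring_1^'n^'m"
  shows "invertible A \<Longrightarrow> invertible (matrix_inv A)"
  using matrix_inv_inverse invertible_def by blast

definition matrix_stabiliser :: "('a::comm_semiring_1^'n) set \<Rightarrow> ('a^'n^'n) set" where
  "matrix_stabiliser S = {g. invertible g \<and> (*v) g ` S = S}"

lemma mat_1_in_matrix_stabiliser: "mat 1 \<in> matrix_stabiliser S"
  by (auto simp: matrix_stabiliser_def invertible_def)

lemma matrix_mul_in_matrix_stabiliser:
  assumes "g \<in> matrix_stabiliser S" and "h \<in> matrix_stabiliser S"
  shows "g ** h \<in> matrix_stabiliser S"
proof -
  have "(*v) (g ** h) ` S = (*v) g ` ((*v) h ` S)"
    by (auto simp: image_image matrix_vector_mul_assoc)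
  then show ?thesis
    using assms by (simp add: matrix_stabiliser_def invertible_mult)
qed

lemma matrix_inv_in_matrix_stabiliser:
  assumes "g \<in> matrix_stabiliser S"
  shows "matrix_inv g \<in> matrix_stabiliser S"
proof -
  have inv: "invertible g" and image: "(*v) g ` S = S"
    using assms by (auto simp: matrix_stabiliser_def)
  have "(*v) (matrix_inv g) ` S = (*v) (matrix_inv g ** g) ` S"
    by (subst (1) image[symmetric]) (simp add: image_image matrix_vector_mul_assoc)
  also have "\<dots> = S"
    using matrix_inv_inverse(2)[OF inv] by simp
  finally show ?thesis
    by (simp add: matrix_stabiliser_def invertible_matrix_inv[OF inv])
qed

lemma matrix_mul_maps_into:
  assumes "(*v) g ` S \<subseteq> S" and "(*v) h ` S \<subseteq> S"
  shows "(*v) (g ** h) ` S \<subseteq> S"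
  using assms by (auto simp: matrix_vector_mul_assoc[symmetric])

lemma in_matrix_stabiliserI:
  assumes "g ** h = mat 1" and "h ** g = mat 1"
    and "(*v) g ` S \<subseteq> S" and "(*v) h ` S \<subseteq> S"
  shows "g \<in> matrix_stabiliser S"
proof -
  have "v = g *v (h *v v)" for v
    using assms(1) by (simp add: matrix_vector_mul_assoc)
  then have "S \<subseteq> (*v) g ` S"
    using assms(4) by blast
  then show ?thesis
    using assms unfolding matrix_stabiliser_def invertible_def by blast
qed

lemma genGroup_subset_matrix_stabiliser:
  assumes "Rmat \<in> matrix_stabiliser S" and "smat \<in> matrix_stabiliser S"
  shows "genGroup \<subseteq> matrix_stabiliser S"
proof
  fix g assume "g \<in> genGroup"
  then show "g \<in> matrix_stabiliser S"
    by induction (use assms mat_1_in_matrix_stabiliser matrix_mul_in_matrix_stabiliser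
        matrix_inv_in_matrix_stabiliser in auto)
qed

lemma Rmat_mult_vector: "Rmat *v vector [x, u, z] = vector [x/2 - 3*z/2, u, x/2 + z/2]"
  unfolding Rmat_def by (simp add: vec_eq_iff forall_3 matrix_vector_mult_def sum_3)

lemma smat_mult_vector: "smat *v vector [x, u, z] = vector [x, u, -z]"
  unfolding smat_def by (simp add: vec_eq_iff forall_3 matrix_vector_mult_def sum_3)

lemma smat_involution: "smat ** smat = mat 1"
  unfolding smat_def by (simp add: vec_eq_iff forall_3 matrix_matrix_mult_def sum_3 mat_def)

lemma Rmat_inverse:
  shows "Rmat ** (smat ** Rmat ** smat) = mat 1" and "smat ** Rmat ** smat ** Rmat = mat 1"
  unfolding Rmat_def smat_def
  by (simp_all add: vec_eq_iff forall_3 matrix_matrix_mult_def sum_3 mat_def)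

lemma smat_maps_XNy: "(*v) smat ` XNy N y \<subseteq> XNy N y"
proof
  fix P assume "P \<in> (*v) smat ` XNy N y"
  then obtain a b where P: "P = smat *v vector [real_of_int a, real_of_int y, real_of_int b]"
    and eq: "a\<^sup>2 + 2*y\<^sup>2 + 3*b\<^sup>2 = 48 * int N + 30"
    unfolding XNy_def by blast
  have "P = vector [real_of_int a, real_of_int y, real_of_int (-b)]"
    unfolding P smat_mult_vector by simp
  moreover have "a\<^sup>2 + 2*y\<^sup>2 + 3*(-b)\<^sup>2 = 48 * int N + 30"
    using eq by simp
  ultimately show "P \<in> XNy N y"
    unfolding XNy_def by blast
qed

lemma Rmat_maps_XNy: "(*v) Rmat ` XNy N y \<subseteq> XNy N y"
proof
  fix P assume "P \<in> (*v) Rmat ` XNy N y"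
  then obtain a b where P: "P = Rmat *v vector [real_of_int a, real_of_int y, real_of_int b]"
    and eq: "a\<^sup>2 + 2*y\<^sup>2 + 3*b\<^sup>2 = 48 * int N + 30"
    unfolding XNy_def by blast
  have "a\<^sup>2 + 3*b\<^sup>2 = 2 * (24 * int N + 15 - y\<^sup>2)"
    using eq by simp
  then have "even (a\<^sup>2 + 3*b\<^sup>2)"
    by (metis dvd_triv_left)
  then have "even (a + b)"
    by simp
  then obtain k where a: "a = 2*k - b"
    by (metis add_diff_cancel_right' evenE)
  have "P = vector [real_of_int (k - 2*b), real_of_int y, real_of_int k]"
    unfolding P Rmat_mult_vector a by (simp add: vec_eq_iff forall_3 field_simps)
  moreover have "(k - 2*b)\<^sup>2 + 3*k\<^sup>2 = a\<^sup>2 + 3*b\<^sup>2"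
    unfolding a by (simp add: power2_eq_square algebra_simps)
  then have "(k - 2*b)\<^sup>2 + 2*y\<^sup>2 + 3*k\<^sup>2 = 48 * int N + 30"
    using eq by linarith
  ultimately show "P \<in> XNy N y"
    unfolding XNy_def by blast
qed

theorem proposition8p41:
  fixes N :: nat and y :: int
  assumes "y \<in> Gamma_N N"
  shows "\<forall>P \<in> XNy N y. {g *v P | g. g \<in> genGroup} \<subseteq> XNy N y"
proof -
  \<comment> \<open>The stabilisation holds for every \<open>y\<close>.\<close>
  have "Rmat \<in> matrix_stabiliser (XNy N y)"
    by (rule in_matrix_stabiliserI[OF Rmat_inverse Rmat_maps_XNy
          matrix_mul_maps_into[OF matrix_mul_maps_into[OF smat_maps_XNy Rmat_maps_XNy] smat_maps_XNy]])
  moreover have "smat \<in> matrix_stabiliser (XNy N y)"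
    by (rule in_matrix_stabiliserI[OF smat_involution smat_involution smat_maps_XNy smat_maps_XNy])
  ultimately have "genGroup \<subseteq> matrix_stabiliser (XNy N y)"
    by (rule genGroup_subset_matrix_stabiliser)
  then show ?thesis
    unfolding matrix_stabiliser_def by auto
qed

end
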